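(* Let $r,d,d_1\in\mathbb{N}$, $s_i\in\mathbb{N}$ for $i\in[r]$. Let $\mathcal{A}=\{\mathbf{a}^1,\dots,\mathbf{a}^r\}\subseteq\mathbb{Z}^d$ be linearly independent with some $\overline{\omega}\in\mathbb{Q}^d$ satisfying $\overline{\omega}\cdot\mathbf{a}^i=1$ for all $i$, and let $\mathcal{B}=\{\mathbf{b}^i_j:i\in[r],j\in[s_i]\}\subseteq\mathbb{Z}^{d_1}$ be a point configuration with a linear map $\pi_1:\mathbb{Z}^{d_1}\to\mathbb{Z}^d$ such that $\pi_1(\mathbf{b}^i_j)=\mathbf{a}^i$ for all $i,j$. Let $w$ be positive weights on $\mathcal{B}$ such that $(\mathcal{B},w)$ has rational linear precision, with blending functions $\{\beta^i_j\}$ satisfying the definition of rational linear precision, and let $P=\operatorname{conv}(\mathcal{B})$. For $i\in[r]$ let $P^i=\operatorname{conv}\{\mathbf{b}^i_j: j\in[s_i]\}$. Then for all $\mathbf{p}\in P^i$, \[\sum_{j\in[s_i]}\beta^i_j(\mathbf{p})=1.\]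
   Context: Scaled projective toric variety: for a finite point configuration $\mathcal{S}\subseteq\mathbb{Z}^n$ with positive weights $w=(w_{\mathbf{s}})$, $X_{\mathcal{S},w}$ is the Zariski closure of the image of $(\mathbb{C}^* )^n\to\mathbb{P}^{|\mathcal{S}|-1}$, $\mathbf{t}\mapsto[w_{\mathbf{s}}\mathbf{t}^{\mathbf{s}}]_{\mathbf{s}\in\mathcal{S}}$ (a row of ones is appended to the matrix of points if the all-ones vector is not in its row span). Rational linear precision: $(\mathcal{S},w)$, with $\Pi=\operatorname{conv}(\mathcal{S})$, has rational linear precision if there are rational functions $\{\hat\beta_{\mathbf{s}}\}_{\mathbf{s}\in\mathcal{S}}$ on $\mathbb{C}^n$ (blending functions) such that (1) $\sum_{\mathbf{s}}\hat\beta_{\mathbf{s}}=1$; (2) $(\hat\beta_{\mathbf{s}})_{\mathbf{s}}:\mathbb{C}^n\dashrightarrow X_{\mathcal{S},w}$ is a rational parametrization of $X_{\mathcal{S},w}$; (3) for every $\mathbf{p}$ in the relative interior of $\Pi$, each $\hat\beta_{\mathbf{s}}(\mathbf{p})$ is defined and a nonnegative real number; (4) $\sum_{\mathbf{s}}\hat\beta_{\mathbf{s}}(\mathbf{p})\,\mathbf{s}=\mathbf{p}$ for all $\mathbf{p}\in\Pi$. *)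

theory Defs
  imports "HOL-Analysis.Analysis"
begin

definition monom_val :: "('v \<Rightarrow> nat) \<Rightarrow> ('v \<Rightarrow> complex) \<Rightarrow> complex" where
  "monom_val e z = (\<Prod>v\<in>{v. e v \<noteq> 0}. z v ^ e v)"

definition is_poly :: "'v set \<Rightarrow> (('v \<Rightarrow> complex) \<Rightarrow> complex) \<Rightarrow> bool" where
  "is_poly V F \<longleftrightarrow> (\<exists>M c. finite M \<and>
      (\<forall>e\<in>M. finite {v. e v \<noteq> 0} \<and> {v. e v \<noteq> 0} \<subseteq> V) \<and>
      (\<forall>z. F z = (\<Sum>e\<in>M. c e * monom_val e z)))"

definition is_hom_poly :: "'v set \<Rightarrow> (('v \<Rightarrow> complex) \<Rightarrow> complex) \<Rightarrow> bool" where
  "is_hom_poly V F \<longleftrightarrow> (\<exists>M c k. finite M \<and>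
      (\<forall>e\<in>M. finite {v. e v \<noteq> 0} \<and> {v. e v \<noteq> 0} \<subseteq> V \<and> (\<Sum>v\<in>{v. e v \<noteq> 0}. e v) = k) \<and>
      (\<forall>z. F z = (\<Sum>e\<in>M. c e * monom_val e z)))"

definition is_vpoly :: "(complex^('n::finite) \<Rightarrow> complex) \<Rightarrow> bool" where
  "is_vpoly F \<longleftrightarrow> is_poly UNIV (\<lambda>z. F (\<chi> l. z l))"

type_synonym ('n) ratfun = "(complex^'n \<Rightarrow> complex) \<times> (complex^'n \<Rightarrow> complex)"

definition is_ratfun :: "('n::finite) ratfun \<Rightarrow> bool" where
  "is_ratfun \<beta> \<longleftrightarrow> is_vpoly (fst \<beta>) \<and> is_vpoly (snd \<beta>) \<and> (\<exists>x. snd \<beta> x \<noteq> 0)"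

definition rf_rep :: "('n::finite) ratfun \<Rightarrow> 'n ratfun \<Rightarrow> bool" where
  "rf_rep \<beta> \<gamma> \<longleftrightarrow> is_vpoly (fst \<gamma>) \<and> is_vpoly (snd \<gamma>) \<and>
      (\<forall>x. fst \<beta> x * snd \<gamma> x = fst \<gamma> x * snd \<beta> x)"

definition rf_defined :: "('n::finite) ratfun \<Rightarrow> complex^'n \<Rightarrow> bool" where
  "rf_defined \<beta> p \<longleftrightarrow> (\<exists>\<gamma>. rf_rep \<beta> \<gamma> \<and> snd \<gamma> p \<noteq> 0)"

definition rf_val :: "('n::finite) ratfun \<Rightarrow> complex^'n \<Rightarrow> complex" where
  "rf_val \<beta> p = (SOME v. \<exists>\<gamma>. rf_rep \<beta> \<gamma> \<and> snd \<gamma> p \<noteq> 0 \<and> v = fst \<gamma> p / snd \<gamma> p)"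

text \<open>Points of projective space with coordinates indexed by J are represented by nonzero
  vectors (on the affine cone), extended by 0 outside J.\<close>
definition proj_closure :: "'k set \<Rightarrow> ('k \<Rightarrow> complex) set \<Rightarrow> ('k \<Rightarrow> complex) set" where
  "proj_closure J A = {z. (\<forall>k. k \<notin> J \<longrightarrow> z k = 0) \<and> (\<exists>k\<in>J. z k \<noteq> 0) \<and>
      (\<forall>F. is_hom_poly J F \<and> (\<forall>a\<in>A. F a = 0) \<longrightarrow> F z = 0)}"

definition toric_image :: "'k set \<Rightarrow> ('k \<Rightarrow> int^('n::finite)) \<Rightarrow> ('k \<Rightarrow> real) \<Rightarrow> ('k \<Rightarrow> complex) set" where
  "toric_image J pt w = {(\<lambda>k. if k \<in> J then complex_of_real (w k) * (\<Prod>l\<in>UNIV. (t$l) powi (pt k $ l)) else 0)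
      | t :: complex^'n. \<forall>l. t$l \<noteq> 0}"

definition toric_var :: "'k set \<Rightarrow> ('k \<Rightarrow> int^('n::finite)) \<Rightarrow> ('k \<Rightarrow> real) \<Rightarrow> ('k \<Rightarrow> complex) set" where
  "toric_var J pt w = proj_closure J (toric_image J pt w)"

definition cvec :: "real^('n::finite) \<Rightarrow> complex^'n" where
  "cvec p = (\<chi> l. complex_of_real (p$l))"

definition rvec :: "int^('n::finite) \<Rightarrow> real^'n" where
  "rvec b = (\<chi> l. real_of_int (b$l))"

definition blending_functions ::
  "'k set \<Rightarrow> ('k \<Rightarrow> int^('n::finite)) \<Rightarrow> ('k \<Rightarrow> real) \<Rightarrow> ('k \<Rightarrow> ('n::finite) ratfun) \<Rightarrow> bool" where
  "blending_functions J pt w \<beta> \<longleftrightarrow>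
     (\<forall>k\<in>J. is_ratfun (\<beta> k)) \<and>
     \<comment> \<open>(1) the blending functions sum to 1\<close>
     (\<forall>x. (\<forall>k\<in>J. snd (\<beta> k) x \<noteq> 0) \<longrightarrow> (\<Sum>k\<in>J. fst (\<beta> k) x / snd (\<beta> k) x) = 1) \<and>
     \<comment> \<open>(2) beta is a rational parametrization of the toric variety (dominant onto it)\<close>
     proj_closure J {(\<lambda>k. if k \<in> J then fst (\<beta> k) x / snd (\<beta> k) x else 0) | x.
                       \<forall>k\<in>J. snd (\<beta> k) x \<noteq> 0}
       = toric_var J pt w \<and>
     \<comment> \<open>(3) defined and nonnegative real on the relative interior\<close>
     (\<forall>p\<in>rel_interior (convex hull (rvec ` pt ` J)). \<forall>k\<in>J.
         rf_defined (\<beta> k) (cvec p) \<and> rf_val (\<beta> k) (cvec p) \<in> \<real> \<and> 0 \<le> Re (rf_val (\<beta> k) (cvec p))) \<and>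
     \<comment> \<open>(4) linear precision on the whole polytope\<close>
     (\<forall>p\<in>convex hull (rvec ` pt ` J).
         (\<forall>k\<in>J. rf_defined (\<beta> k) (cvec p)) \<and>
         (\<forall>l. (\<Sum>k\<in>J. rf_val (\<beta> k) (cvec p) * of_int (pt k $ l)) = complex_of_real (p$l)))"

definition has_rational_linear_precision ::
  "'k set \<Rightarrow> ('k \<Rightarrow> int^('n::finite)) \<Rightarrow> ('k \<Rightarrow> real) \<Rightarrow> bool" where
  "has_rational_linear_precision J pt w \<longleftrightarrow> (\<exists>\<beta>. blending_functions J pt w \<beta>)"

end

theory Submission
  imports Defs
begin

text \<open>Apply \<open>\<pi>\<^sub>1\<close> to the linear precision identity \<open>\<Sum> \<beta>\<^sup>i\<^sup>'\<^sub>j(p) b\<^sup>i\<^sup>'\<^sub>j = p\<close> at a point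
  \<open>p \<in> P\<^sup>i\<close>.  Since \<open>\<pi>\<^sub>1\<close> sends every \<open>b\<^sup>i\<^sup>'\<^sub>j\<close> to \<open>a\<^sup>i\<^sup>'\<close> and, being linear, is constant
  \<open>= a\<^sup>i\<close> on the convex hull \<open>P\<^sup>i\<close>, this gives \<open>\<Sum>\<^sub>i\<^sub>' (\<Sum>\<^sub>j \<beta>\<^sup>i\<^sup>'\<^sub>j(p)) a\<^sup>i\<^sup>' = a\<^sup>i\<close>, and linear
  independence of the \<open>a\<^sup>i\<^sup>'\<close> forces the coefficient of \<open>a\<^sup>i\<close> to be 1.  The blending values are
  complex, so the argument runs on their real and imaginary parts separately.  Only property (4)
  of the blending functions is needed.\<close>

lemma independent_family_coeffs_unique:
  fixes V :: "'i \<Rightarrow> 'a::real_vector"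
  assumes fin: "finite I" and inj: "inj_on V I" and indep: "independent (V ` I)"
    and eq: "(\<Sum>i\<in>I. x i *\<^sub>R V i) = (\<Sum>i\<in>I. y i *\<^sub>R V i)" and i: "i \<in> I"
  shows "x i = y i"
proof -
  define u where "u v = x (the_inv_into I V v) - y (the_inv_into I V v)" for v
  have "(\<Sum>v\<in>V ` I. u v *\<^sub>R v) = (\<Sum>i\<in>I. u (V i) *\<^sub>R V i)"
    by (rule sum.reindex[OF inj, unfolded comp_def])
  also have "\<dots> = (\<Sum>i\<in>I. x i *\<^sub>R V i) - (\<Sum>i\<in>I. y i *\<^sub>R V i)"
    using inj by (simp add: u_def the_inv_into_f_f scaleR_diff_left sum_subtractf)
  finally have "(\<Sum>v\<in>V ` I. u v *\<^sub>R v) = 0"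
    using eq by simp
  then have "u (V i) = 0"
    using indep i unfolding dependent_finite[OF finite_imageI[OF fin]] by blast
  then show ?thesis
    using inj i by (simp add: u_def the_inv_into_f_f)
qed

lemma complex_combination_eq_of_real_vec:
  fixes v :: "'k \<Rightarrow> real^'n" and g :: "'k \<Rightarrow> complex"
  assumes "\<forall>l. (\<Sum>k\<in>K. g k * of_real (v k $ l)) = of_real (p $ l)"
  shows "(\<Sum>k\<in>K. Re (g k) *\<^sub>R v k) = p" and "(\<Sum>k\<in>K. Im (g k) *\<^sub>R v k) = 0"
proof -
  have "Re (\<Sum>k\<in>K. g k * of_real (v k $ l)) = p $ l"
    and "Im (\<Sum>k\<in>K. g k * of_real (v k $ l)) = 0" for l
    using assms by simp_all
  then show "(\<Sum>k\<in>K. Re (g k) *\<^sub>R v k) = p" and "(\<Sum>k\<in>K. Im (g k) *\<^sub>R v k) = 0"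
    by (simp_all add: vec_eq_iff Re_sum Im_sum)
qed

lemma linear_constant_on_convex_hull:
  assumes "linear f" and "\<And>x. x \<in> S \<Longrightarrow> f x = c" and "p \<in> convex hull S"
  shows "f p = c"
proof -
  have "f p \<in> convex hull (f ` S)"
    using assms(3) convex_hull_linear_image[OF assms(1)] by blast
  also have "\<dots> \<subseteq> convex hull {c}"
    using assms(2) by (intro hull_mono) auto
  finally show ?thesis by simp
qed

lemma linear_sum_Sigma_fibres:
  assumes "linear f" and "finite I" and "\<And>i. i \<in> I \<Longrightarrow> finite (K i)"
    and "\<And>i j. i \<in> I \<Longrightarrow> j \<in> K i \<Longrightarrow> f (v (i, j)) = u i"
  shows "f (\<Sum>k\<in>Sigma I K. x k *\<^sub>R v k) = (\<Sum>i\<in>I. (\<Sum>j\<in>K i. x (i, j)) *\<^sub>R u i)"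
proof -
  have "f (\<Sum>k\<in>Sigma I K. x k *\<^sub>R v k) = (\<Sum>i\<in>I. \<Sum>j\<in>K i. x (i, j) *\<^sub>R f (v (i, j)))"
    using assms(1-3) by (simp add: linear_sum linear_scale sum.Sigma)
  also have "\<dots> = (\<Sum>i\<in>I. (\<Sum>j\<in>K i. x (i, j)) *\<^sub>R u i)"
    using assms(4) by (simp add: scaleR_sum_left)
  finally show ?thesis .
qed

lemma sum_fibre_weights_eq_1:
  fixes f :: "real^'n \<Rightarrow> 'a::real_vector" and v :: "'i \<times> 'j \<Rightarrow> real^'n"
    and g :: "'i \<times> 'j \<Rightarrow> complex"
  assumes f: "linear f" and fin: "finite I" "\<And>i. i \<in> I \<Longrightarrow> finite (K i)"
    and fibres: "\<And>i j. i \<in> I \<Longrightarrow> j \<in> K i \<Longrightarrow> f (v (i, j)) = u i"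
    and inj: "inj_on u I" and indep: "independent (u ` I)"
    and precision: "\<forall>l. (\<Sum>k\<in>Sigma I K. g k * of_real (v k $ l)) = of_real (p $ l)"
    and p: "f p = u i" and i: "i \<in> I"
  shows "(\<Sum>j\<in>K i. g (i, j)) = 1"
proof -
  note real_parts = complex_combination_eq_of_real_vec[OF precision]
  note f_combination = linear_sum_Sigma_fibres[where v = v, OF f fin fibres]
  have "(\<Sum>i'\<in>I. (\<Sum>j\<in>K i'. Re (g (i', j))) *\<^sub>R u i')
      = f (\<Sum>k\<in>Sigma I K. Re (g k) *\<^sub>R v k)"
    by (rule f_combination[symmetric])
  also have "\<dots> = f p"
    by (simp only: real_parts(1))
  also have "\<dots> = (\<Sum>i'\<in>I. of_bool (i' = i) *\<^sub>R u i')"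
    using p i fin(1) by (subst sum.remove[of _ i]) auto
  finally have Re_sum_eq: "(\<Sum>j\<in>K i. Re (g (i, j))) = of_bool (i = i)"
    by (rule independent_family_coeffs_unique[OF fin(1) inj indep _ i])
  have "(\<Sum>i'\<in>I. (\<Sum>j\<in>K i'. Im (g (i', j))) *\<^sub>R u i')
      = f (\<Sum>k\<in>Sigma I K. Im (g k) *\<^sub>R v k)"
    by (rule f_combination[symmetric])
  also have "\<dots> = (\<Sum>i'\<in>I. 0 *\<^sub>R u i')"
    by (simp add: real_parts(2) linear_0[OF f])
  finally have Im_sum_eq: "(\<Sum>j\<in>K i. Im (g (i, j))) = 0"
    by (rule independent_family_coeffs_unique[OF fin(1) inj indep _ i])
  show ?thesis
    using Re_sum_eq Im_sum_eq by (simp add: complex_eq_iff Re_sum Im_sum)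
qed

definition rmat :: "int^'m^'n \<Rightarrow> real^'m^'n" where
  "rmat M = (\<chi> i j. real_of_int (M $ i $ j))"

lemma rvec_matrix_vector_mult: "rvec (M *v x) = rmat M *v rvec x"
  by (simp add: vec_eq_iff rvec_def rmat_def matrix_vector_mult_def)

theorem lemma3p4:
  fixes r :: nat and s :: "nat \<Rightarrow> nat"
    and a :: "nat \<Rightarrow> int^'d"
    and \<omega> :: "real^'d"
    and b :: "nat \<Rightarrow> nat \<Rightarrow> int^'e"
    and \<pi>1 :: "int^'e^'d"
    and w :: "nat \<times> nat \<Rightarrow> real"
    and \<beta> :: "nat \<times> nat \<Rightarrow> 'e ratfun"
  defines "J \<equiv> {(i, j). i < r \<and> j < s i}"
  assumes A_distinct: "inj_on (\<lambda>i. rvec (a i)) {..<r}"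
    and A_indep: "independent ((\<lambda>i. rvec (a i)) ` {..<r})"
    and omega_rat: "\<forall>l. \<omega> $ l \<in> \<rat>"
    and omega: "\<forall>i<r. \<omega> \<bullet> rvec (a i) = 1"
    and B_distinct: "inj_on (\<lambda>(i, j). b i j) J"
    and proj: "\<forall>i<r. \<forall>j<s i. \<pi>1 *v b i j = a i"
    and w_pos: "\<forall>k\<in>J. w k > 0"
    and rlp: "has_rational_linear_precision J (\<lambda>(i, j). b i j) w"
    and blend: "blending_functions J (\<lambda>(i, j). b i j) w \<beta>"
  shows "\<forall>i<r. \<forall>p\<in>convex hull {rvec (b i j) | j. j < s i}.
           (\<Sum>j<s i. rf_val (\<beta> (i, j)) (cvec p)) = 1"
proof (intro allI impI ballI)
  fix i p
  assume i: "i < r" and p: "p \<in> convex hull {rvec (b i j) | j. j < s i}"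
  define v where "v k = rvec (case k of (i', j) \<Rightarrow> b i' j)" for k
  have J_Sigma: "J = Sigma {..<r} (\<lambda>i'. {..<s i'})"
    unfolding J_def by auto
  have "{rvec (b i j) | j. j < s i} \<subseteq> rvec ` (\<lambda>(i, j). b i j) ` J"
    using i unfolding J_def by (auto simp: image_iff)
  then have "p \<in> convex hull (rvec ` (\<lambda>(i, j). b i j) ` J)"
    using p hull_mono by blast
  then have precision: "\<forall>l. (\<Sum>k\<in>Sigma {..<r} (\<lambda>i'. {..<s i'}).
      rf_val (\<beta> k) (cvec p) * of_real (v k $ l)) = of_real (p $ l)"
    using blend by (simp add: blending_functions_def J_Sigma v_def rvec_def case_prod_beta)
  have fibres: "rmat \<pi>1 *v v (i', j) = rvec (a i')"
    if "i' \<in> {..<r}" "j \<in> {..<s i'}" for i' j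
    using proj that by (simp add: v_def rvec_matrix_vector_mult[symmetric])
  have "rmat \<pi>1 *v p = rvec (a i)"
    by (rule linear_constant_on_convex_hull[OF _ _ p])
       (use proj i in \<open>auto simp: rvec_matrix_vector_mult[symmetric]\<close>)
  with i show "(\<Sum>j<s i. rf_val (\<beta> (i, j)) (cvec p)) = 1"
    using sum_fibre_weights_eq_1[where v = v, OF matrix_vector_mul_linear finite_lessThan
        finite_lessThan fibres A_distinct A_indep precision]
    by simp
qed

end
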